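(* Let $\mathbf G=(G,\le,\cdot,/,0,1)$ be a left-residuated po-groupoid whose multiplication is commutative ($x\cdot y=y\cdot x$ for all $x,y$). Then $\mathbf G$ satisfies $x\cdot y=\neg(\neg x/y)$ for all $x,y\in G$ if and only if it satisfies the contraposition law $x/y=\neg y/\neg x$ for all $x,y\in G$.
   Context: A (bounded integral) left-residuated po-groupoid is a structure $\mathbf G=(G,\le,\cdot,/,0,1)$ where $(G,\le,0,1)$ is a bounded poset with least element $0$ and greatest element $1$, $\cdot$ is a binary operation on $G$ with $1\cdot x=x\cdot 1=x$ for all $x$, and $/$ is a binary operation on $G$ satisfying the left residuation law: for all $x,y,z\in G$, $x\cdot y\le z\iff x\le z/y$. The negation is $\neg x:=0/x$. *)

theory Defs
  imports Main
begin

text \<open>A bounded integral left-residuated po-groupoid on carrier G with order le,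
multiplication m, left residual r (r z y = z / y), bottom z0 and top e1.\<close>

definition lr_pogroupoid ::
  "'a set \<Rightarrow> ('a \<Rightarrow> 'a \<Rightarrow> bool) \<Rightarrow> ('a \<Rightarrow> 'a \<Rightarrow> 'a) \<Rightarrow> ('a \<Rightarrow> 'a \<Rightarrow> 'a) \<Rightarrow> 'a \<Rightarrow> 'a \<Rightarrow> bool"
where
  "lr_pogroupoid G le m r z0 e1 \<longleftrightarrow>
     z0 \<in> G \<and> e1 \<in> G \<and>
     (\<forall>x\<in>G. le x x) \<and>
     (\<forall>x\<in>G. \<forall>y\<in>G. le x y \<and> le y x \<longrightarrow> x = y) \<and>
     (\<forall>x\<in>G. \<forall>y\<in>G. \<forall>z\<in>G. le x y \<and> le y z \<longrightarrow> le x z) \<and>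
     (\<forall>x\<in>G. le z0 x \<and> le x e1) \<and>
     (\<forall>x\<in>G. \<forall>y\<in>G. m x y \<in> G) \<and>
     (\<forall>x\<in>G. \<forall>y\<in>G. r x y \<in> G) \<and>
     (\<forall>x\<in>G. m e1 x = x \<and> m x e1 = x) \<and>
     (\<forall>x\<in>G. \<forall>y\<in>G. \<forall>z\<in>G. le (m x y) z \<longleftrightarrow> le x (r z y))"

end

theory Submission
  imports Defs
begin

text \<open>Negation \<open>\<not>x = 0/x\<close> is a Galois connection with itself as soon as
multiplication commutes. Each of the two laws forces it to be an involution, and for
an involutive negation both laws turn out to be restatements of the single cyclic law
\<open>x\<cdot>y \<le> z \<longleftrightarrow> \<not>z\<cdot>y \<le> \<not>x\<close>: the product law by comparing upper bounds of
\<open>x\<cdot>y\<close> and \<open>\<not>(\<not>x/y)\<close>, the contraposition law by comparing lower bounds of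
\<open>x/y\<close> and \<open>\<not>y/\<not>x\<close> (the latter even without involutivity).\<close>

locale left_residuated =
  fixes G :: "'a set" and le :: "'a \<Rightarrow> 'a \<Rightarrow> bool"
    and m r :: "'a \<Rightarrow> 'a \<Rightarrow> 'a" and z0 e1 :: 'a
  assumes lr_pogroupoid: "lr_pogroupoid G le m r z0 e1"
begin

abbreviation neg :: "'a \<Rightarrow> 'a" where "neg x \<equiv> r z0 x"

lemma zero_closed: "z0 \<in> G"
  and one_closed: "e1 \<in> G"
  and le_refl: "x \<in> G \<Longrightarrow> le x x"
  and le_antisym: "\<lbrakk>x \<in> G; y \<in> G; le x y; le y x\<rbrakk> \<Longrightarrow> x = y"
  and mult_closed: "\<lbrakk>x \<in> G; y \<in> G\<rbrakk> \<Longrightarrow> m x y \<in> G"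
  and res_closed: "\<lbrakk>x \<in> G; y \<in> G\<rbrakk> \<Longrightarrow> r x y \<in> G"
  and mult_one_right: "x \<in> G \<Longrightarrow> m x e1 = x"
  and residuation: "\<lbrakk>x \<in> G; y \<in> G; z \<in> G\<rbrakk> \<Longrightarrow> le (m x y) z \<longleftrightarrow> le x (r z y)"
  using lr_pogroupoid unfolding lr_pogroupoid_def by blast+

lemma neg_closed: "x \<in> G \<Longrightarrow> neg x \<in> G"
  by (simp add: res_closed zero_closed)

lemma eq_if_same_upper_bounds:
  assumes "a \<in> G" "b \<in> G" "\<And>z. z \<in> G \<Longrightarrow> le a z \<longleftrightarrow> le b z"
  shows "a = b"
  using assms le_refl le_antisym by blast

lemma eq_if_same_lower_bounds:
  assumes "a \<in> G" "b \<in> G" "\<And>z. z \<in> G \<Longrightarrow> le z a \<longleftrightarrow> le z b"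
  shows "a = b"
  using assms le_refl le_antisym by blast

lemma res_one: "x \<in> G \<Longrightarrow> r x e1 = x"
  by (rule eq_if_same_lower_bounds)
    (simp_all add: res_closed one_closed residuation[symmetric] mult_one_right)

lemma neg_neg_if_mult_eq_neg_res:
  assumes "\<forall>x\<in>G. \<forall>y\<in>G. m x y = neg (r (neg x) y)" and "x \<in> G"
  shows "neg (neg x) = x"
proof -
  have "neg (neg x) = neg (r (neg x) e1)"
    using assms(2) by (simp add: neg_closed res_one)
  also have "\<dots> = m x e1"
    using assms one_closed by simp
  finally show ?thesis
    using assms(2) by (simp add: mult_one_right)
qed

end

locale comm_left_residuated = left_residuated +
  assumes mult_commute: "\<lbrakk>x \<in> G; y \<in> G\<rbrakk> \<Longrightarrow> m x y = m y x"
begin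

definition cyclic_law :: bool where
  "cyclic_law \<longleftrightarrow>
     (\<forall>x\<in>G. \<forall>y\<in>G. \<forall>z\<in>G. le (m x y) z \<longleftrightarrow> le (m (neg z) y) (neg x))"

lemma le_neg_swap: "\<lbrakk>u \<in> G; v \<in> G\<rbrakk> \<Longrightarrow> le u (neg v) \<longleftrightarrow> le v (neg u)"
  by (metis residuation mult_commute zero_closed)

lemma le_neg_neg: "x \<in> G \<Longrightarrow> le x (neg (neg x))"
  using le_neg_swap[of "neg x" x] by (simp add: neg_closed le_refl)

lemma neg_le_swap:
  assumes "\<And>x. x \<in> G \<Longrightarrow> neg (neg x) = x" and "a \<in> G" "z \<in> G"
  shows "le (neg a) z \<longleftrightarrow> le (neg z) a"
  using le_neg_swap[of "neg a" "neg z"] assms by (simp add: neg_closed)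

lemma neg_neg_if_cyclic_law:
  assumes "cyclic_law" and x: "x \<in> G"
  shows "neg (neg x) = x"
proof -
  have contrapose: "le u z \<longleftrightarrow> le (neg z) (neg u)" if "u \<in> G" "z \<in> G" for u z
    using assms that one_closed unfolding cyclic_law_def
    by (metis mult_one_right neg_closed)
  have "le (neg (neg x)) x"
    using contrapose[of "neg (neg x)" x] le_neg_neg[of "neg x"] x by (simp add: neg_closed)
  then show ?thesis
    using le_neg_neg x le_antisym neg_closed by blast
qed

lemma neg_res_le_iff:
  assumes "\<And>x. x \<in> G \<Longrightarrow> neg (neg x) = x" and "x \<in> G" "y \<in> G" "z \<in> G"
  shows "le (neg (r (neg x) y)) z \<longleftrightarrow> le (m (neg z) y) (neg x)"
  using assms neg_le_swap[OF assms(1)]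
  by (simp add: neg_closed res_closed residuation)

lemma mult_eq_neg_res_iff_cyclic_law:
  "(\<forall>x\<in>G. \<forall>y\<in>G. m x y = neg (r (neg x) y)) \<longleftrightarrow> cyclic_law"
proof
  assume mult_law: "\<forall>x\<in>G. \<forall>y\<in>G. m x y = neg (r (neg x) y)"
  have "\<And>x. x \<in> G \<Longrightarrow> neg (neg x) = x"
    using neg_neg_if_mult_eq_neg_res[OF mult_law] .
  then show cyclic_law
    unfolding cyclic_law_def using mult_law by (simp add: neg_res_le_iff)
next
  assume cyclic: cyclic_law
  note involutive = neg_neg_if_cyclic_law[OF cyclic]
  show "\<forall>x\<in>G. \<forall>y\<in>G. m x y = neg (r (neg x) y)"
  proof (intro ballI eq_if_same_upper_bounds)
    fix x y z assume "x \<in> G" "y \<in> G" "z \<in> G"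
    then show "le (m x y) z \<longleftrightarrow> le (neg (r (neg x) y)) z"
      using cyclic unfolding cyclic_law_def by (simp add: neg_res_le_iff[OF involutive])
  qed (simp_all add: mult_closed res_closed neg_closed)
qed

lemma contraposition_iff_cyclic_law:
  "(\<forall>x\<in>G. \<forall>y\<in>G. r x y = r (neg y) (neg x)) \<longleftrightarrow> cyclic_law"
proof -
  have lower_bounds:
    "(le a (r x y) \<longleftrightarrow> le a (r (neg y) (neg x))) \<longleftrightarrow> (le (m y a) x \<longleftrightarrow> le (m (neg x) a) (neg y))"
    if "a \<in> G" "x \<in> G" "y \<in> G" for a x y
    using that by (simp add: residuation[symmetric] neg_closed mult_commute)
  have "(\<forall>x\<in>G. \<forall>y\<in>G. r x y = r (neg y) (neg x)) \<longleftrightarrow>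
        (\<forall>x\<in>G. \<forall>y\<in>G. \<forall>a\<in>G. le a (r x y) \<longleftrightarrow> le a (r (neg y) (neg x)))"
    by (metis eq_if_same_lower_bounds neg_closed res_closed)
  also have "\<dots> \<longleftrightarrow> cyclic_law"
    unfolding cyclic_law_def using lower_bounds by blast
  finally show ?thesis .
qed

end

theorem mainTheorem10:
  fixes G :: "'a set" and le :: "'a \<Rightarrow> 'a \<Rightarrow> bool"
    and m r :: "'a \<Rightarrow> 'a \<Rightarrow> 'a" and z0 e1 :: 'a
  assumes "lr_pogroupoid G le m r z0 e1"
    and "\<forall>x\<in>G. \<forall>y\<in>G. m x y = m y x"
  shows "(\<forall>x\<in>G. \<forall>y\<in>G. m x y = r z0 (r (r z0 x) y))
     \<longleftrightarrow> (\<forall>x\<in>G. \<forall>y\<in>G. r x y = r (r z0 y) (r z0 x))"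
proof -
  interpret comm_left_residuated G le m r z0 e1
    using assms by unfold_locales auto
  show ?thesis
    using mult_eq_neg_res_iff_cyclic_law contraposition_iff_cyclic_law by simp
qed

end
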